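(* For GP-EI with BOI and any $t\in\mathbb{N}$, when both $E^r(t)$ and $E^y(t)$ hold, $$r_t\le\big(c_y(t)+2\beta_t^{1/2}+\phi(0)\big)\sigma_{t-1}(\mathbf{x}_t)+c_\alpha\beta_t^{1/2}\sigma_{t-1}([\mathbf{x}^*]_t)+\frac{1}{t^2},$$ where $c_y(t)=\max\big\{\log^{1/2}\!\big(\frac{t-1+\sigma^2}{2\pi\phi^2(0)\sigma^2}\big),3\big\}$ and $c_\alpha=1.328$.
   Context: Setting: $d\ge1$, $r>0$, $C\subseteq[0,r]^d$ compact; $k$ positive semidefinite kernel with $k(\mathbf{x},\mathbf{x}')\le1$, $k(\mathbf{x},\mathbf{x})=1$ on $C$. $f$ is a sample path of $GP(0,k)$, Lipschitz with constant $L\ge1/(rd)$ in $\ell_1$-norm; $\mathbf{x}^*\in\arg\min_Cf$. Observations $y_t=f(\mathbf{x}_t)+\epsilon_t$, $\epsilon_t$ i.i.d. $\mathcal{N}(0,\sigma^2)$, $\sigma>0$. Posterior $\mu_t(\mathbf{x})=\mathbf{k}_t(\mathbf{x})^T(\mathbf{K}_t+\sigma^2\mathbf{I})^{-1}\mathbf{y}_{1:t}$, $\sigma_t^2(\mathbf{x})=1-\mathbf{k}_t(\mathbf{x})^T(\mathbf{K}_t+\sigma^2\mathbf{I})^{-1}\mathbf{k}_t(\mathbf{x})$ ($\mathbf{K}_t=[k(\mathbf{x}_i,\mathbf{x}_j)]_{i,j\le t}$, $\mathbf{k}_t(\mathbf{x})=[k(\mathbf{x}_i,\mathbf{x})]_{i\le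 t}$). BOI incumbent $\xi_t^+=y_t^+=\min_{i\le t}y_i$. $EI_t(\mathbf{x})=(\xi_t^+-\mu_t(\mathbf{x}))\Phi(z_t(\mathbf{x}))+\sigma_t(\mathbf{x})\phi(z_t(\mathbf{x}))$, $z_t=(\xi_t^+-\mu_t)/\sigma_t$, $\phi,\Phi$ standard normal pdf/cdf; GP-EI picks $\mathbf{x}_t\in\arg\max_CEI_{t-1}$. $r_t=f(\mathbf{x}_t)-f(\mathbf{x}^* )$. Discretization: $\mathbb{C}_t\subseteq C$ finite, $|\mathbb{C}_t|=(Lrdt^2)^d$, $\|\mathbf{x}-[\mathbf{x}]_t\|_1\le1/(Lt^2)$ for all $\mathbf{x}\in C$, $[\mathbf{x}]_t$ a closest point of $\mathbb{C}_t$. With $\delta\in(0,1)$, $\pi_t=\pi^2t^2/6$, $\beta_t=2\log(8|\mathbb{C}_t|\pi_t/\delta)$. $E^r(t)$: $|f(\mathbf{x})-\mu_{t-1}(\mathbf{x})|\le\beta_t^{1/2}\sigma_{t-1}(\mathbf{x})$ holds for all $\mathbf{x}\in\mathbb{C}_t$, for $\mathbf{x}=\mathbf{x}_t$ and for $\mathbf{x}=\mathbf{x}^*$. $E^y(t)$: $y^+_{t-1}-f(\mathbf{x}^* )\ge\beta_t^{1/2}\sigma_{t-1}(\mathbf{x}_t)$. *)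

theory Defs
  imports "HOL-Probability.Probability" "Jordan_Normal_Form.Gauss_Jordan_Elimination"
begin

definition l1dist :: "real^'n \<Rightarrow> real^'n \<Rightarrow> real" where
  "l1dist x x' = (\<Sum>i\<in>UNIV. \<bar>x$i - x'$i\<bar>)"

definition psd_kernel :: "('a \<Rightarrow> 'a \<Rightarrow> real) \<Rightarrow> bool" where
  "psd_kernel k \<longleftrightarrow> (\<forall>x x'. k x x' = k x' x) \<and>
     (\<forall>(m::nat) (p::nat \<Rightarrow> 'a) (c::nat \<Rightarrow> real).
        (\<Sum>i<m. \<Sum>j<m. c i * c j * k (p i) (p j)) \<ge> 0)"

(* data after t observations: points x 1, ..., x t and values y 1, ..., y t *)
definition gram :: "('a \<Rightarrow> 'a \<Rightarrow> real) \<Rightarrow> (nat \<Rightarrow> 'a) \<Rightarrow> nat \<Rightarrow> real mat" where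
  "gram k x t = mat t t (\<lambda>(i,j). k (x (i+1)) (x (j+1)))"

definition kvec :: "('a \<Rightarrow> 'a \<Rightarrow> real) \<Rightarrow> (nat \<Rightarrow> 'a) \<Rightarrow> nat \<Rightarrow> 'a \<Rightarrow> real vec" where
  "kvec k x t p = vec t (\<lambda>i. k (x (i+1)) p)"

definition yvec :: "(nat \<Rightarrow> real) \<Rightarrow> nat \<Rightarrow> real vec" where
  "yvec y t = vec t (\<lambda>i. y (i+1))"

definition reg_inv :: "('a \<Rightarrow> 'a \<Rightarrow> real) \<Rightarrow> real \<Rightarrow> (nat \<Rightarrow> 'a) \<Rightarrow> nat \<Rightarrow> real mat" where
  "reg_inv k sn x t = the (mat_inverse (gram k x t + sn\<^sup>2 \<cdot>\<^sub>m 1\<^sub>m t))"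

definition post_mean :: "('a \<Rightarrow> 'a \<Rightarrow> real) \<Rightarrow> real \<Rightarrow> (nat \<Rightarrow> 'a) \<Rightarrow> (nat \<Rightarrow> real) \<Rightarrow> nat \<Rightarrow> 'a \<Rightarrow> real" where
  "post_mean k sn x y t p = scalar_prod (kvec k x t p) (reg_inv k sn x t *\<^sub>v yvec y t)"

definition post_var :: "('a \<Rightarrow> 'a \<Rightarrow> real) \<Rightarrow> real \<Rightarrow> (nat \<Rightarrow> 'a) \<Rightarrow> nat \<Rightarrow> 'a \<Rightarrow> real" where
  "post_var k sn x t p = 1 - scalar_prod (kvec k x t p) (reg_inv k sn x t *\<^sub>v kvec k x t p)"

definition post_sd :: "('a \<Rightarrow> 'a \<Rightarrow> real) \<Rightarrow> real \<Rightarrow> (nat \<Rightarrow> 'a) \<Rightarrow> nat \<Rightarrow> 'a \<Rightarrow> real" where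
  "post_sd k sn x t p = sqrt (post_var k sn x t p)"

definition nphi :: "real \<Rightarrow> real" where
  "nphi z = std_normal_density z"

definition nPhi :: "real \<Rightarrow> real" where
  "nPhi z = (LBINT u:{..z}. std_normal_density u)"

definition incumbent :: "(nat \<Rightarrow> real) \<Rightarrow> nat \<Rightarrow> real" where
  "incumbent y t = Min (y ` {1..t})"

definition EI :: "('a \<Rightarrow> 'a \<Rightarrow> real) \<Rightarrow> real \<Rightarrow> (nat \<Rightarrow> 'a) \<Rightarrow> (nat \<Rightarrow> real) \<Rightarrow> nat \<Rightarrow> 'a \<Rightarrow> real" where
  "EI k sn x y t p =
     (let xi = incumbent y t; m = post_mean k sn x y t p; s = post_sd k sn x t p;
          z = (xi - m) / s
      in (xi - m) * nPhi z + s * nphi z)"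

definition pi_t :: "nat \<Rightarrow> real" where
  "pi_t t = pi\<^sup>2 * (real t)\<^sup>2 / 6"

definition beta :: "nat \<Rightarrow> nat \<Rightarrow> real \<Rightarrow> real" where
  "beta t card_Ct delta = 2 * ln (8 * real card_Ct * pi_t t / delta)"

definition c_y :: "real \<Rightarrow> nat \<Rightarrow> real" where
  "c_y sn t = max (sqrt (ln ((real t - 1 + sn\<^sup>2) / (2 * pi * (nphi 0)\<^sup>2 * sn\<^sup>2)))) 3"

definition c_alpha :: real where
  "c_alpha = 1.328"

end

theory Submission
  imports Defs "Jordan_Normal_Form.Determinant" "HOL-Real_Asymp.Real_Asymp"
begin

(*
  Write s, m and \<xi> for the posterior standard deviation, the posterior mean and the
  incumbent after t - 1 observations. Where k(p,p) = 1 the posterior variance is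
  positive, so EI(p) = s(p) \<tau>((\<xi> - m(p)) / s(p)) with \<tau>(z) = z \<Phi>(z) + \<phi>(z), the
  expectation of max(z - U, 0) for a standard normal U. Hence \<tau> is monotone,
  z \<le> \<tau>(z) and \<tau>(z) - z \<le> \<phi>(0) + max(-z, 0).

  Let d = [xstar]_t. The confidence bounds at x_t and d and the Lipschitz bound
  f(d) \<le> f(xstar) + 1/t^2 reduce the regret to m(x_t) - m(d) + \<beta>^(1/2) (s(x_t) + s(d)) + 1/t^2.
  Since x_t maximises EI, \<xi> - m(d) \<le> EI(d) \<le> EI(x_t) = s(x_t) \<tau>(z_t), so
  m(x_t) - m(d) \<le> s(x_t) (\<tau>(z_t) - z_t). Finally z_t \<ge> -(\<beta>^(1/2) + 3): otherwise
  EI(x_t) \<le> s(x_t) \<phi>(\<beta>^(1/2) + 3), whereas E^y(t) and the confidence bound at xstar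
  force EI(xstar) above that value.

  The argument proves the bound with 3 in place of c_y(t) \<ge> 3 and 1 in place of c_\<alpha>.
*)

section \<open>The standard normal density and distribution function\<close>

lemma nphi_eq: "nphi z = exp (- z\<^sup>2 / 2) / sqrt (2 * pi)"
  by (simp add: nphi_def std_normal_density_def)

lemma nphi_pos: "0 < nphi z"
  by (simp add: nphi_eq)

lemma nphi_antimono: "\<bar>u\<bar> \<le> \<bar>v\<bar> \<Longrightarrow> nphi v \<le> nphi u"
  unfolding nphi_eq by (intro divide_right_mono) (auto simp: abs_le_square_iff)

lemma nphi_strict_antimono: "\<bar>u\<bar> < \<bar>v\<bar> \<Longrightarrow> nphi v < nphi u"
  using abs_le_square_iff[of v u] unfolding nphi_eq by (intro divide_strict_right_mono) auto

lemma nphi_0_le_1: "nphi 0 \<le> 1"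
proof -
  have "1 \<le> sqrt (2 * pi)"
    using pi_gt3 by simp
  then show ?thesis
    by (simp add: nphi_eq)
qed

lemma nphi_lt_half_nphi_0:
  assumes "4 \<le> a"
  shows "nphi a < nphi 0 / 2"
proof -
  have "16 \<le> a\<^sup>2"
    using power_mono[OF assms, of 2] by simp
  then have "2 < exp (a\<^sup>2 / 2)"
    using exp_ge_add_one_self[of "a\<^sup>2 / 2"] by linarith
  then have "exp (- a\<^sup>2 / 2) < 1 / 2"
    by (simp add: exp_minus[of "a\<^sup>2 / 2", simplified] field_simps)
  then have "exp (- a\<^sup>2 / 2) / sqrt (2 * pi) < (1 / 2) / sqrt (2 * pi)"
    by (intro divide_strict_right_mono) auto
  then show ?thesis
    by (simp add: nphi_eq)
qed

lemma tendsto_std_normal_density_at_top: "((\<lambda>u. std_normal_density u) \<longlongrightarrow> 0) at_top"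
  unfolding std_normal_density_def by real_asymp

lemma integrable_std_normal_moment_1: "integrable lborel (\<lambda>u. std_normal_density u * u)"
  using integrable_std_normal_moment[of 1] by simp

lemma integrable_std_normal_indicator:
  assumes "A \<in> sets lborel"
  shows "integrable lborel (\<lambda>u. indicator A u * std_normal_density u)"
    and "integrable lborel (\<lambda>u. indicator A u * (std_normal_density u * u))"
proof -
  have "integrable lborel (\<lambda>u. indicator A u *\<^sub>R std_normal_density u)"
    using assms by (intro integrable_mult_indicator) auto
  then show "integrable lborel (\<lambda>u. indicator A u * std_normal_density u)"
    by simp
  show "integrable lborel (\<lambda>u. indicator A u * (std_normal_density u * u))"
    using integrable_mult_indicator[OF assms integrable_std_normal_moment_1] by simp
qed

lemma integral_std_normal_moment_1_atLeast:
  "(LINT u|lborel. indicator {a..} u * (std_normal_density u * u)) = std_normal_density a"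
proof -
  let ?g = "\<lambda>u. indicator {a..} u * (std_normal_density u * u)"
  let ?I = "\<lambda>b. LINT u|lborel. indicator {..b} u *\<^sub>R ?g u"
  have "(?I \<longlongrightarrow> integral\<^sup>L lborel ?g) at_top"
    by (intro tendsto_integral_at_top integrable_std_normal_indicator) simp_all
  moreover have "\<forall>\<^sub>F b in at_top. std_normal_density a - std_normal_density b = ?I b"
    unfolding eventually_at_top_linorder
  proof (intro exI allI impI)
    fix b assume "a \<le> b"
    have "?I b = (LINT u|lborel. indicator {a..b} u *\<^sub>R (std_normal_density u * u))"
      by (intro Bochner_Integration.integral_cong) (auto split: split_indicator)
    also have "\<dots> = - std_normal_density b - (- std_normal_density a)"
      by (intro integral_FTC_atLeastAtMost \<open>a \<le> b\<close>)
        (auto intro!: derivative_eq_intros continuous_intros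
          simp: has_real_derivative_iff_has_vector_derivative[symmetric] std_normal_density_def
            field_simps power2_eq_square)
    finally show "std_normal_density a - std_normal_density b = ?I b"
      by simp
  qed
  then have "(?I \<longlongrightarrow> std_normal_density a - 0) at_top"
    by (rule Lim_transform_eventually[rotated])
      (intro tendsto_diff tendsto_const tendsto_std_normal_density_at_top)
  ultimately have "integral\<^sup>L lborel ?g = std_normal_density a - 0"
    by (rule tendsto_unique[OF trivial_limit_at_top_linorder])
  then show ?thesis
    by simp
qed

lemma integral_std_normal_moment_1_atMost:
  "(LINT u|lborel. indicator {..z} u * (std_normal_density u * u)) = - std_normal_density z"
proof -
  have "AE u in lborel. indicator {..z} u * (std_normal_density u * u)
      = std_normal_density u * u - indicator {z..} u * (std_normal_density u * u)"
    using AE_lborel_singleton[of z] by eventually_elim (auto split: split_indicator)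
  then have "(LINT u|lborel. indicator {..z} u * (std_normal_density u * u))
      = (LINT u|lborel. std_normal_density u * u - indicator {z..} u * (std_normal_density u * u))"
    by (intro integral_cong_AE) auto
  also have "\<dots> = (LINT u|lborel. std_normal_density u * u)
      - (LINT u|lborel. indicator {z..} u * (std_normal_density u * u))"
    by (intro Bochner_Integration.integral_diff integrable_std_normal_moment_1
        integrable_std_normal_indicator) simp
  finally show ?thesis
    using integral_std_normal_moment_odd[of 0] by (simp add: integral_std_normal_moment_1_atLeast)
qed

lemma nPhi_eq_integral: "nPhi z = (LINT u|lborel. indicator {..z} u * std_normal_density u)"
  by (simp add: nPhi_def set_lebesgue_integral_def)

lemma nPhi_nonneg: "0 \<le> nPhi z"
  unfolding nPhi_eq_integral by (intro integral_nonneg_AE) auto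

lemma nPhi_le_1: "nPhi z \<le> 1"
proof -
  have "nPhi z \<le> (LINT u|lborel. std_normal_density u)"
    unfolding nPhi_eq_integral
    by (intro integral_mono integrable_std_normal_indicator) (auto split: split_indicator)
  then show ?thesis
    by simp
qed

section \<open>Expected improvement over a standard normal variable\<close>

definition tau :: "real \<Rightarrow> real" where
  "tau z = z * nPhi z + nphi z"

lemma
  shows integrable_tau: "integrable lborel (\<lambda>u. max (z - u) 0 * std_normal_density u)"
    and tau_eq_integral: "tau z = (LINT u|lborel. max (z - u) 0 * std_normal_density u)"
proof -
  have split: "(\<lambda>u. max (z - u) 0 * std_normal_density u)
      = (\<lambda>u. z * (indicator {..z} u * std_normal_density u)
          - indicator {..z} u * (std_normal_density u * u))"
    by (auto split: split_indicator simp: max_def algebra_simps)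
  show "integrable lborel (\<lambda>u. max (z - u) 0 * std_normal_density u)"
    unfolding split by (simp add: integrable_std_normal_indicator)
  show "tau z = (LINT u|lborel. max (z - u) 0 * std_normal_density u)"
    unfolding split
    by (simp add: integrable_std_normal_indicator Bochner_Integration.integral_diff
        integral_std_normal_moment_1_atMost nPhi_eq_integral tau_def nphi_def)
qed

lemma tau_mono: "z1 \<le> z2 \<Longrightarrow> tau z1 \<le> tau z2"
  unfolding tau_eq_integral by (intro integral_mono integrable_tau mult_right_mono) auto

lemma tau_ge: "z \<le> tau z"
proof -
  have "(z - u) * std_normal_density u \<le> max (z - u) 0 * std_normal_density u" for u
    by (intro mult_right_mono) auto
  then have "(LINT u|lborel. z * std_normal_density u - std_normal_density u * u) \<le> tau z"
    unfolding tau_eq_integral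
    by (intro integral_mono integrable_tau Bochner_Integration.integrable_diff integrable_mult_right
        integrable_normal_density integrable_std_normal_moment_1) (auto simp: algebra_simps)
  moreover have "(LINT u|lborel. z * std_normal_density u - std_normal_density u * u) = z"
    using integral_std_normal_moment_odd[of 0]
    by (simp add: Bochner_Integration.integral_diff integrable_std_normal_moment_1)
  ultimately show ?thesis
    by simp
qed

lemma nphi_add_2_le_tau_uminus:
  assumes "0 \<le> w"
  shows "nphi (w + 2) \<le> tau (- w)"
proof -
  have "(LINT u|lborel. indicator {-w-2..-w-1} u * nphi (w + 2)) \<le> tau (- w)"
    unfolding tau_eq_integral
  proof (intro integral_mono integrable_tau)
    fix u
    show "indicator {-w-2..-w-1} u * nphi (w + 2) \<le> max (- w - u) 0 * std_normal_density u"
    proof (cases "u \<in> {-w-2..-w-1}")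
      case True
      then have "1 * nphi (w + 2) \<le> max (- w - u) 0 * nphi u"
        using assms by (intro mult_mono nphi_antimono) (auto simp: less_imp_le[OF nphi_pos])
      then show ?thesis
        using True by (simp add: nphi_def)
    qed simp
  qed simp
  then show ?thesis
    by simp
qed

lemma tau_le_nphi: "z \<le> 0 \<Longrightarrow> tau z \<le> nphi z"
  unfolding tau_def using nPhi_nonneg[of z] by (simp add: mult_nonpos_nonneg)

lemma tau_diff_le: "tau z - z \<le> nphi 0 + max (- z) 0"
proof (cases "0 \<le> z")
  case True
  then have "z * nPhi z \<le> z"
    using nPhi_le_1[of z] by (simp add: mult_left_le)
  then show ?thesis
    using nphi_antimono[of 0 z] by (simp add: tau_def)
next
  case False
  then show ?thesis
    using tau_le_nphi[of z] nphi_antimono[of 0 z] by simp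
qed

lemma tau_0: "tau 0 = nphi 0"
  by (simp add: tau_def)

section \<open>Positivity of the posterior variance\<close>

lemma smult_mat_mult_vec:
  assumes "v \<in> carrier_vec n" "A \<in> carrier_mat m n"
  shows "(c \<cdot>\<^sub>m A) *\<^sub>v v = c \<cdot>\<^sub>v (A *\<^sub>v (v :: 'a :: comm_ring vec))"
  using assms by (intro eq_vecI) (auto simp: scalar_prod_def sum_distrib_left mult.assoc)

lemma gram_carrier: "gram k x n \<in> carrier_mat n n"
  by (simp add: gram_def)

lemma kvec_carrier: "kvec k x n p \<in> carrier_vec n"
  by (simp add: kvec_def)

lemma gram_quadratic_form:
  assumes "v \<in> carrier_vec n"
  shows "v \<bullet> (gram k x n *\<^sub>v v) = (\<Sum>i<n. \<Sum>j<n. v $ i * v $ j * k (x (i + 1)) (x (j + 1)))"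
  using assms
  by (auto simp: gram_def scalar_prod_def sum_distrib_left atLeast0LessThan mult.assoc
      mult.left_commute intro!: sum.cong)

lemma psd_kernel_gram_nonneg:
  assumes "psd_kernel k" "v \<in> carrier_vec n"
  shows "0 \<le> v \<bullet> (gram k x n *\<^sub>v v)"
  using assms(1) unfolding gram_quadratic_form[OF assms(2)] psd_kernel_def
  by (auto elim!: allE[of _ n] allE[of _ "\<lambda>i. x (i + 1)"] allE[of _ "\<lambda>i. v $ i"])

lemma regularized_gram_quadratic_form:
  assumes "v \<in> carrier_vec n"
  shows "v \<bullet> ((gram k x n + c \<cdot>\<^sub>m 1\<^sub>m n) *\<^sub>v v) = v \<bullet> (gram k x n *\<^sub>v v) + c * (v \<bullet> v)"
proof -
  have "(gram k x n + c \<cdot>\<^sub>m 1\<^sub>m n) *\<^sub>v v = gram k x n *\<^sub>v v + c \<cdot>\<^sub>v v"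
    using assms
    by (simp add: add_mult_distrib_mat_vec[OF gram_carrier]
        smult_mat_mult_vec[OF assms one_carrier_mat])
  then show ?thesis
    using assms
    by (simp add: scalar_prod_add_distrib[OF assms mult_mat_vec_carrier[OF gram_carrier assms]]
        scalar_prod_smult_distrib[OF assms assms])
qed

lemma regularized_gram_inverse:
  assumes "psd_kernel k" "0 < sn"
  shows "(gram k x n + sn\<^sup>2 \<cdot>\<^sub>m 1\<^sub>m n) * reg_inv k sn x n = 1\<^sub>m n"
    and "reg_inv k sn x n \<in> carrier_mat n n"
proof -
  let ?A = "gram k x n + sn\<^sup>2 \<cdot>\<^sub>m 1\<^sub>m n"
  have A: "?A \<in> carrier_mat n n"
    by (simp add: gram_carrier)
  have "det ?A \<noteq> 0"
  proof
    assume "det ?A = 0"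
    then obtain v where v: "v \<in> carrier_vec n" "v \<noteq> 0\<^sub>v n" "?A *\<^sub>v v = 0\<^sub>v n"
      using det_0_iff_vec_prod_zero[OF A] by blast
    have "0 < v \<bullet> v"
      using conjugate_square_greater_0_vec[OF v(1)] v(2) by simp
    then have "0 < v \<bullet> (?A *\<^sub>v v)"
      using regularized_gram_quadratic_form[OF v(1), of k x "sn\<^sup>2"]
        psd_kernel_gram_nonneg[OF assms(1) v(1)] assms(2)
      by (simp add: add_nonneg_pos)
    then show False
      using v by simp
  qed
  then obtain B where "mat_inverse ?A = Some B"
    using mat_inverse(1)[OF A] det_non_zero_imp_unit[OF A] by fastforce
  then show "?A * reg_inv k sn x n = 1\<^sub>m n" "reg_inv k sn x n \<in> carrier_mat n n"
    using mat_inverse(2)[OF A] by (simp_all add: reg_inv_def)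
qed

lemma psd_kernel_quadratic_form_extend:
  fixes w :: "real vec"
  assumes "psd_kernel k" "w \<in> carrier_vec n"
  shows "0 \<le> w \<bullet> (gram k x n *\<^sub>v w) - 2 * (kvec k x n q \<bullet> w) + k q q"
proof -
  define p where "p i = (if i < n then x (i + 1) else q)" for i
  define c where "c i = (if i < n then w $ i else - 1)" for i
  have sym: "k q (x i) = k (x i) q" for i
    using assms(1) by (simp add: psd_kernel_def)
  have "0 \<le> (\<Sum>i<Suc n. \<Sum>j<Suc n. c i * c j * k (p i) (p j))"
    using assms(1) unfolding psd_kernel_def by blast
  also have "\<dots> = (\<Sum>i<n. \<Sum>j<n. w $ i * w $ j * k (x (i + 1)) (x (j + 1)))
      - 2 * (\<Sum>i<n. k (x (i + 1)) q * w $ i) + k q q"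
    by (simp add: sum.lessThan_Suc c_def p_def sym sum_subtractf sum_negf sum.distrib
        algebra_simps)
  also have "(\<Sum>i<n. k (x (i + 1)) q * w $ i) = kvec k x n q \<bullet> w"
    using assms(2) by (simp add: kvec_def scalar_prod_def atLeast0LessThan)
  finally show ?thesis
    by (simp add: gram_quadratic_form[OF assms(2)])
qed

lemma post_var_pos:
  assumes "psd_kernel k" "0 < sn" "k q q = 1"
  shows "0 < post_var k sn x n q"
proof -
  let ?kq = "kvec k x n q"
  define w where "w = reg_inv k sn x n *\<^sub>v ?kq"
  have w: "w \<in> carrier_vec n"
    unfolding w_def
    by (rule mult_mat_vec_carrier[OF regularized_gram_inverse(2)[OF assms(1,2)] kvec_carrier])
  have "(gram k x n + sn\<^sup>2 \<cdot>\<^sub>m 1\<^sub>m n) *\<^sub>v w = ?kq"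
    using regularized_gram_inverse[OF assms(1,2)]
    by (simp add: w_def assoc_mult_mat_vec[symmetric, of _ n n _ n] gram_carrier kvec_carrier)
  then have kq_w: "?kq \<bullet> w = w \<bullet> (gram k x n *\<^sub>v w) + sn\<^sup>2 * (w \<bullet> w)"
    using regularized_gram_quadratic_form[OF w, of k x "sn\<^sup>2"]
      comm_scalar_prod[OF kvec_carrier[of k x n q] w] by simp
  have var: "post_var k sn x n q = 1 - ?kq \<bullet> w"
    by (simp add: post_var_def w_def)
  show ?thesis
  proof (cases "w = 0\<^sub>v n")
    case True
    then show ?thesis
      using var kvec_carrier[of k x n q] by simp
  next
    case False
    then have "0 < sn\<^sup>2 * (w \<bullet> w)"
      using conjugate_square_greater_0_vec[OF w] assms(2) by simp
    then show ?thesis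
      using psd_kernel_quadratic_form_extend[OF assms(1) w, of x q] assms(3) kq_w var by linarith
  qed
qed

lemma post_sd_pos: "psd_kernel k \<Longrightarrow> 0 < sn \<Longrightarrow> k q q = 1 \<Longrightarrow> 0 < post_sd k sn x n q"
  by (simp add: post_sd_def post_var_pos)

lemma EI_eq_tau:
  assumes "0 < post_sd k sn x n p"
  shows "EI k sn x y n p = post_sd k sn x n p
      * tau ((incumbent y n - post_mean k sn x y n p) / post_sd k sn x n p)"
  using assms by (simp add: EI_def tau_def Let_def field_simps)

section \<open>The regret bound\<close>

lemma half_nphi_0_le_scaled_tau:
  fixes st ss z :: real
  assumes "0 < ss" "0 \<le> z" "st - ss \<le> ss * z"
  shows "st * (nphi 0 / 2) \<le> ss * tau z"
proof (cases "st \<le> 2 * ss")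
  case True
  have "st * (nphi 0 / 2) \<le> ss * nphi 0"
    using True nphi_pos[of 0] by (simp add: mult_right_mono)
  also have "\<dots> \<le> ss * tau z"
    using tau_mono[OF assms(2)] tau_0 assms(1) by simp
  finally show ?thesis .
next
  case False
  then have "st * nphi 0 \<le> st"
    using nphi_0_le_1 assms(1) by (simp add: mult_left_le)
  then have "st * (nphi 0 / 2) \<le> st - ss"
    using False by linarith
  also have "\<dots> \<le> ss * tau z"
    using assms(3) mult_left_mono[OF tau_ge[of z] less_imp_le[OF assms(1)]] by linarith
  finally show ?thesis .
qed

lemma nphi_lt_scaled_tau_of_gap:
  fixes b st ss ms fs xi :: real
  assumes b: "1 \<le> b" and st: "0 < st" and ss: "0 < ss"
    and conf: "\<bar>fs - ms\<bar> \<le> b * ss" and gap: "b * st \<le> xi - fs"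
  shows "st * nphi (b + 3) < ss * tau ((xi - ms) / ss)"
proof -
  define z where "z = (xi - ms) / ss"
  have "ss * z = xi - ms"
    using ss by (simp add: z_def)
  then have gap_z: "b * (st - ss) \<le> ss * z"
    using conf gap by (simp add: abs_le_iff algebra_simps)
  show ?thesis
  proof (cases "st \<le> ss")
    case True
    have "0 \<le> b * st"
      using b st by simp
    then have "ss * (- b) \<le> ss * z"
      using gap_z by (simp add: algebra_simps)
    then have "- b \<le> z"
      using ss by (metis mult_le_cancel_left_pos)
    then have "tau (- b) \<le> tau z"
      by (rule tau_mono)
    moreover have "nphi (b + 2) \<le> tau (- b)"
      using b by (intro nphi_add_2_le_tau_uminus) simp
    ultimately have "nphi (b + 2) \<le> tau z"
      by linarith
    then have "st * nphi (b + 2) \<le> ss * tau z"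
      using True st nphi_pos[of "b + 2"] by (intro mult_mono) auto
    moreover have "st * nphi (b + 3) < st * nphi (b + 2)"
      using b st by (intro mult_strict_left_mono nphi_strict_antimono) auto
    ultimately show ?thesis
      by (simp add: z_def)
  next
    case False
    then have "st - ss \<le> b * (st - ss)"
      using mult_right_mono[of 1 b "st - ss"] b by simp
    then have z_gap: "st - ss \<le> ss * z"
      using gap_z by linarith
    then have "0 \<le> ss * z"
      using False by linarith
    then have "0 \<le> z"
      using ss by (simp add: zero_le_mult_iff)
    with z_gap
    have "st * (nphi 0 / 2) \<le> ss * tau z"
      using half_nphi_0_le_scaled_tau ss by blast
    moreover have "st * nphi (b + 3) < st * (nphi 0 / 2)"
      using nphi_lt_half_nphi_0[of "b + 3"] b st by simp
    ultimately show ?thesis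
      by (simp add: z_def)
  qed
qed

lemma mean_diff_le_of_scaled_tau_le:
  fixes st sd mt md xi a :: real
  assumes st: "0 < st" and sd: "0 < sd" and a: "0 \<le> a"
    and tau_le: "sd * tau ((xi - md) / sd) \<le> st * tau ((xi - mt) / st)"
    and z: "- a \<le> (xi - mt) / st"
  shows "mt - md \<le> (nphi 0 + a) * st"
proof -
  define zt where "zt = (xi - mt) / st"
  have "xi - md \<le> sd * tau ((xi - md) / sd)"
    using mult_left_mono[OF tau_ge[of "(xi - md) / sd"], of sd] sd by simp
  then have "xi - md \<le> st * tau zt"
    using tau_le by (simp add: zt_def)
  moreover have "st * zt = xi - mt"
    using st by (simp add: zt_def)
  moreover have "st * (tau zt - zt) \<le> st * (nphi 0 + a)"
    using tau_diff_le[of zt] z a st by (intro mult_left_mono) (auto simp: zt_def)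
  ultimately show ?thesis
    by (simp add: algebra_simps)
qed

(* The suffixes t, s and d refer to the points x_t, xstar and [xstar]_t. *)
lemma regret_le_of_confidence_bounds:
  fixes b st ss sd ft fs fd mt ms md xi e :: real
  assumes b: "1 \<le> b" and pos: "0 < st" "0 < ss" "0 < sd"
    and conf_t: "\<bar>ft - mt\<bar> \<le> b * st" and conf_s: "\<bar>fs - ms\<bar> \<le> b * ss"
    and conf_d: "\<bar>fd - md\<bar> \<le> b * sd"
    and lip: "fd - e \<le> fs" and gap: "b * st \<le> xi - fs"
    and max_s: "ss * tau ((xi - ms) / ss) \<le> st * tau ((xi - mt) / st)"
    and max_d: "sd * tau ((xi - md) / sd) \<le> st * tau ((xi - mt) / st)"
  shows "ft - fs \<le> (3 + 2 * b + nphi 0) * st + b * sd + e"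
proof -
  have "- (b + 3) \<le> (xi - mt) / st"
  proof (rule ccontr)
    assume "\<not> - (b + 3) \<le> (xi - mt) / st"
    then have "tau ((xi - mt) / st) \<le> nphi ((xi - mt) / st)"
      and "nphi ((xi - mt) / st) \<le> nphi (b + 3)"
      using b by (auto intro!: tau_le_nphi nphi_antimono simp: abs_if)
    then have "tau ((xi - mt) / st) \<le> nphi (b + 3)"
      by linarith
    then have "st * tau ((xi - mt) / st) \<le> st * nphi (b + 3)"
      using pos(1) by simp
    then show False
      using nphi_lt_scaled_tau_of_gap[OF b pos(1,2) conf_s gap] max_s by linarith
  qed
  then have "mt - md \<le> (nphi 0 + (b + 3)) * st"
    using mean_diff_le_of_scaled_tau_le[OF pos(1,3) _ max_d] b by simp
  then show ?thesis
    using conf_t conf_d lip by (simp add: abs_le_iff algebra_simps)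
qed

lemma beta_ge_1:
  assumes "1 \<le> m" "1 \<le> t" "0 < delta" "delta < 1"
  shows "1 \<le> beta t m delta"
proof -
  have "9 \<le> pi\<^sup>2"
    using pi_gt3 power_mono[of 3 pi 2] by simp
  moreover have "1 \<le> (real t)\<^sup>2"
    using assms(2) by simp
  ultimately have "9 \<le> pi\<^sup>2 * (real t)\<^sup>2"
    using mult_mono[of 9 "pi\<^sup>2" 1 "(real t)\<^sup>2"] by simp
  then have "1 \<le> pi_t t"
    by (simp add: pi_t_def)
  then have "8 \<le> 8 * real m * pi_t t"
    using assms(1) mult_mono[of 1 "real m" 1 "pi_t t"] by simp
  then have arg: "8 \<le> 8 * real m * pi_t t / delta"
    using assms(3,4) by (simp add: le_divide_eq)
  then have "exp 1 \<le> 8 * real m * pi_t t / delta"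
    using exp_le by linarith
  then have "1 \<le> ln (8 * real m * pi_t t / delta)"
    using arg by (subst ln_ge_iff) auto
  then show ?thesis
    by (simp add: beta_def)
qed

lemma lipschitz_bound_of_close:
  fixes f :: "'a \<Rightarrow> real" and dist :: "'a \<Rightarrow> 'a \<Rightarrow> real"
  assumes "0 < L" and "\<forall>p\<in>C. \<forall>q\<in>C. \<bar>f p - f q\<bar> \<le> L * dist p q"
    and "p \<in> C" "q \<in> C" "dist p q \<le> 1 / (L * c)"
  shows "\<bar>f p - f q\<bar> \<le> 1 / c"
proof -
  have "L * dist p q \<le> L * (1 / (L * c))"
    using assms(1,5) by (intro mult_left_mono) auto
  then show ?thesis
    using assms(1-4) by fastforce
qed

theorem mainTheorem7:
  fixes C :: "(real^'n) set" and r L sn delta :: real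
    and k :: "real^'n \<Rightarrow> real^'n \<Rightarrow> real"
    and f :: "real^'n \<Rightarrow> real" and xstar :: "real^'n"
    and x :: "nat \<Rightarrow> real^'n" and y eps :: "nat \<Rightarrow> real"
    and Ct :: "(real^'n) set" and disc :: "real^'n \<Rightarrow> real^'n"
    and t :: nat
  assumes r_pos: "r > 0"
    and C_box: "C \<subseteq> {p. \<forall>i. 0 \<le> p$i \<and> p$i \<le> r}"
    and C_compact: "compact C"
    and k_psd: "psd_kernel k"
    and k_le1: "\<forall>p\<in>C. \<forall>q\<in>C. k p q \<le> 1"
    and k_diag: "\<forall>p\<in>C. k p p = 1"
    and L_ge: "L \<ge> 1 / (r * real CARD('n))"
    and f_lip: "\<forall>p\<in>C. \<forall>q\<in>C. \<bar>f p - f q\<bar> \<le> L * l1dist p q"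
    and xstar_min: "xstar \<in> C" "\<forall>p\<in>C. f xstar \<le> f p"
    and sigma_pos: "sn > 0"
    and obs: "\<forall>i. y i = f (x i) + eps i"
    and t_pos: "t \<ge> 1"
    and x_in_C: "\<forall>i\<in>{1..t}. x i \<in> C"
    and x_EI: "\<forall>p\<in>C. EI k sn x y (t - 1) p \<le> EI k sn x y (t - 1) (x t)"
    and delta: "0 < delta" "delta < 1"
    and Ct_sub: "Ct \<subseteq> C" and Ct_fin: "finite Ct"
    and Ct_card: "real (card Ct) = (L * r * real CARD('n) * (real t)\<^sup>2) ^ CARD('n)"
    and disc_in: "\<forall>p\<in>C. disc p \<in> Ct"
    and disc_closest: "\<forall>p\<in>C. \<forall>q\<in>Ct. l1dist p (disc p) \<le> l1dist p q"
    and disc_close: "\<forall>p\<in>C. l1dist p (disc p) \<le> 1 / (L * (real t)\<^sup>2)"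
    and Er: "\<forall>p \<in> Ct \<union> {x t, xstar}.
               \<bar>f p - post_mean k sn x y (t - 1) p\<bar>
                 \<le> sqrt (beta t (card Ct) delta) * post_sd k sn x (t - 1) p"
    and Ey: "incumbent y (t - 1) - f xstar \<ge> sqrt (beta t (card Ct) delta) * post_sd k sn x (t - 1) (x t)"
  shows "f (x t) - f xstar \<le>
           (c_y sn t + 2 * sqrt (beta t (card Ct) delta) + nphi 0) * post_sd k sn x (t - 1) (x t)
           + c_alpha * sqrt (beta t (card Ct) delta) * post_sd k sn x (t - 1) (disc xstar)
           + 1 / (real t)\<^sup>2"
proof -
  let ?b = "sqrt (beta t (card Ct) delta)" and ?s = "post_sd k sn x (t - 1)"
    and ?m = "post_mean k sn x y (t - 1)" and ?xi = "incumbent y (t - 1)"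
  have d: "disc xstar \<in> Ct" "disc xstar \<in> C" and xt: "x t \<in> C"
    using disc_in xstar_min(1) Ct_sub x_in_C t_pos by auto
  have s_pos: "0 < ?s p" if "p \<in> C" for p
    using post_sd_pos[OF k_psd sigma_pos] k_diag that by simp
  have EI_max: "?s p * tau ((?xi - ?m p) / ?s p) \<le> ?s (x t) * tau ((?xi - ?m (x t)) / ?s (x t))"
    if "p \<in> C" for p
    using x_EI[rule_format, OF that]
    unfolding EI_eq_tau[OF s_pos[OF that]] EI_eq_tau[OF s_pos[OF xt]] .
  have b: "1 \<le> ?b"
    using beta_ge_1[OF _ t_pos delta, of "card Ct"] d(1) Ct_fin by (auto simp: Suc_le_eq card_gt_0_iff)
  have "0 < L"
    using order_less_le_trans[OF _ L_ge] r_pos by simp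
  then have "\<bar>f xstar - f (disc xstar)\<bar> \<le> 1 / (real t)\<^sup>2"
    using lipschitz_bound_of_close[OF _ f_lip xstar_min(1) d(2)] disc_close xstar_min(1) by simp
  then have lip: "f (disc xstar) - 1 / (real t)\<^sup>2 \<le> f xstar"
    by (simp add: abs_le_iff)
  have "f (x t) - f xstar \<le> (3 + 2 * ?b + nphi 0) * ?s (x t) + ?b * ?s (disc xstar) + 1 / (real t)\<^sup>2"
    using Er d(1) by (intro regret_le_of_confidence_bounds[OF b s_pos[OF xt] s_pos[OF xstar_min(1)]
        s_pos[OF d(2)] _ _ _ lip Ey EI_max[OF xstar_min(1)] EI_max[OF d(2)]]) auto
  moreover have "(3 + 2 * ?b + nphi 0) * ?s (x t) \<le> (c_y sn t + 2 * ?b + nphi 0) * ?s (x t)"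
    using s_pos[OF xt] by (intro mult_right_mono) (auto simp: c_y_def)
  moreover have "?b * ?s (disc xstar) \<le> c_alpha * ?b * ?s (disc xstar)"
    using s_pos[OF d(2)] b by (intro mult_right_mono) (auto simp: c_alpha_def)
  ultimately show ?thesis
    by linarith
qed

end
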